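(* Fix $S$. For an $S$-regular graph $G$ on $n$ vertices, $\lambda_B>\sqrt{\lambda_S}-o(1)$, where $o(1)$ denotes a quantity tending to $0$ as $n\to\infty$.
   Context: All graphs are simple, undirected and connected. For a $k\times k$ matrix $S=(s_{ij})$ with nonnegative integer entries, $G=(V,E)$ is $S$-regular if $V$ is partitioned into nonempty cells $V_1,\dots,V_k$ such that every vertex of $V_i$ has exactly $s_{ij}$ neighbours in $V_j$. Let $A$ be the adjacency matrix, $n=|V|>k$. The subspace $W=\mathrm{span}\{\mathbf{1}_{V_1},\dots,\mathbf{1}_{V_k}\}$ is $A$-invariant with eigenvalues on $W$ equal to those of $S$; the eigenvalues of $A$ on $W^\perp$ are the bulk eigenvalues, and $\lambda_B$ is the largest absolute value of a bulk eigenvalue. $\lambda_S$ is the largest eigenvalue of $S$. *)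

theory Defs
  imports Complex_Main
begin

text \<open>Graphs on the vertex set {0..<n}: E is the (symmetric, irreflexive) adjacency relation.
  A partition into k cells is given by cell :: nat => nat, vertex v lying in cell (cell v) < k.\<close>

definition simple_graph :: "nat \<Rightarrow> (nat \<Rightarrow> nat \<Rightarrow> bool) \<Rightarrow> bool" where
  "simple_graph n E \<longleftrightarrow> (\<forall>u v. E u v \<longrightarrow> u < n \<and> v < n \<and> u \<noteq> v \<and> E v u)"

definition connected_graph :: "nat \<Rightarrow> (nat \<Rightarrow> nat \<Rightarrow> bool) \<Rightarrow> bool" where
  "connected_graph n E \<longleftrightarrow> (\<forall>u<n. \<forall>v<n. E\<^sup>*\<^sup>* u v)"

definition S_regular ::
  "nat \<Rightarrow> (nat \<Rightarrow> nat \<Rightarrow> nat) \<Rightarrow> nat \<Rightarrow> (nat \<Rightarrow> nat \<Rightarrow> bool) \<Rightarrow> (nat \<Rightarrow> nat) \<Rightarrow> bool" where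
  "S_regular k S n E cell \<longleftrightarrow>
     simple_graph n E \<and> connected_graph n E \<and>
     (\<forall>v<n. cell v < k) \<and>
     (\<forall>i<k. \<exists>v<n. cell v = i) \<and>
     (\<forall>v<n. \<forall>j<k. card {u. u < n \<and> E v u \<and> cell u = j} = S (cell v) j)"

text \<open>mu is an eigenvalue of A restricted to the orthogonal complement W^perp of
  W = span of the cell indicator vectors (a bulk eigenvalue).\<close>
definition bulk_eigenvalue ::
  "nat \<Rightarrow> (nat \<Rightarrow> nat \<Rightarrow> bool) \<Rightarrow> nat \<Rightarrow> (nat \<Rightarrow> nat) \<Rightarrow> real \<Rightarrow> bool" where
  "bulk_eigenvalue n E k cell \<mu> \<longleftrightarrow>
     (\<exists>x :: nat \<Rightarrow> real.
        (\<forall>v. n \<le> v \<longrightarrow> x v = 0) \<and> (\<exists>v<n. x v \<noteq> 0) \<and>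
        (\<forall>i<k. (\<Sum>v\<in>{v. v < n \<and> cell v = i}. x v) = 0) \<and>
        (\<forall>v<n. (\<Sum>u\<in>{u. u < n \<and> E v u}. x u) = \<mu> * x v))"

definition lambda_B :: "nat \<Rightarrow> (nat \<Rightarrow> nat \<Rightarrow> bool) \<Rightarrow> nat \<Rightarrow> (nat \<Rightarrow> nat) \<Rightarrow> real" where
  "lambda_B n E k cell = Max {\<bar>\<mu>\<bar> | \<mu>. bulk_eigenvalue n E k cell \<mu>}"

definition lambda_S :: "nat \<Rightarrow> (nat \<Rightarrow> nat \<Rightarrow> nat) \<Rightarrow> real" where
  "lambda_S k S = Max {\<mu>. \<exists>y :: nat \<Rightarrow> real. (\<exists>i<k. y i \<noteq> 0) \<and>
       (\<forall>i<k. (\<Sum>j<k. real (S i j) * y j) = \<mu> * y i)}"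

end

(* Let d be the largest row sum of S, attained at the cell V_i; every eigenvalue of the
   nonnegative matrix S has modulus at most d, so lambda_S <= d, and every vertex of V_i
   has degree d. Along an edge cell sizes change by at most a factor D bounding the row
   sums, so by connectivity |V_i| >= n / (k D^k); for large n the cell V_i therefore
   contains two vertices v0, v1 without a common neighbour. The vector x = e_v0 - e_v1
   is orthogonal to every cell indicator and satisfies |A x|^2 = 2 d = d |x|^2.
   Maximising the Rayleigh quotient of A^2 on the A-invariant space W^perp produces an
   eigenvector of A^2 there, and hence a bulk eigenvalue mu with mu^2 >= d >= lambda_S.
   So lambda_B >= sqrt lambda_S as soon as n > k D^k (D^2 + 1); no epsilon is needed. *)

theory Submission
  imports Defs "HOL-Analysis.Function_Topology" "Jordan_Normal_Form.Spectral_Radius"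
begin

lemma ex_greatest_index:
  fixes f :: "nat \<Rightarrow> 'a::linorder"
  assumes "0 < m"
  obtains i where "i < m" "\<And>j. j < m \<Longrightarrow> f j \<le> f i"
proof -
  have "Max (f ` {..<m}) \<in> f ` {..<m}"
    using assms by (intro Max_in) auto
  then obtain i where "i < m" "f i = Max (f ` {..<m})"
    by auto
  then show ?thesis
    using that by simp
qed

lemma chain_stabilises:
  fixes F :: "nat \<Rightarrow> 'a set"
  assumes mono: "\<And>t. F t \<subseteq> F (Suc t)" and bounded: "\<And>t. F t \<subseteq> X" and "finite X"
  obtains t where "t \<le> card X" "F (Suc t) = F t"
proof -
  have "\<exists>t\<le>card X. F (Suc t) = F t"
  proof (rule ccontr)
    assume "\<not> ?thesis"
    then have strict: "F t \<subset> F (Suc t)" if "t \<le> card X" for t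
      using mono that by blast
    have "t \<le> card (F t)" if "t \<le> Suc (card X)" for t
      using that
    proof (induction t)
      case (Suc t)
      have "card (F t) < card (F (Suc t))"
        using strict[of t] Suc.prems finite_subset[OF bounded \<open>finite X\<close>]
        by (intro psubset_card_mono) auto
      then show ?case
        using Suc by simp
    qed simp
    then have "Suc (card X) \<le> card (F (Suc (card X)))"
      by simp
    moreover have "card (F (Suc (card X))) \<le> card X"
      using bounded \<open>finite X\<close> by (rule card_mono[rotated])
    ultimately show False
      by simp
  qed
  then show ?thesis
    using that by blast
qed

definition dot :: "nat \<Rightarrow> (nat \<Rightarrow> real) \<Rightarrow> (nat \<Rightarrow> real) \<Rightarrow> real" where
  "dot n x y = (\<Sum>v<n. x v * y v)"

definition mat_apply :: "nat \<Rightarrow> (nat \<Rightarrow> nat \<Rightarrow> real) \<Rightarrow> (nat \<Rightarrow> real) \<Rightarrow> nat \<Rightarrow> real" where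
  "mat_apply n a x v = (if v < n then \<Sum>u<n. a v u * x u else 0)"

definition mat_mult :: "nat \<Rightarrow> (nat \<Rightarrow> nat \<Rightarrow> real) \<Rightarrow> (nat \<Rightarrow> nat \<Rightarrow> real) \<Rightarrow> nat \<Rightarrow> nat \<Rightarrow> real" where
  "mat_mult n a b u w = (\<Sum>v<n. a u v * b v w)"

text \<open>Vectors of \<open>\<real>\<^sup>n\<close> are functions \<open>nat \<Rightarrow> real\<close> vanishing from \<open>n\<close> on; \<open>closed\<close> refers to
  the product topology on \<open>nat \<Rightarrow> real\<close>.\<close>
definition closed_subspace_below :: "nat \<Rightarrow> (nat \<Rightarrow> real) set \<Rightarrow> bool" where
  "closed_subspace_below n U \<longleftrightarrow> closed U \<and> (\<forall>x\<in>U. \<forall>v\<ge>n. x v = 0) \<and>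
     (\<forall>x\<in>U. \<forall>y\<in>U. \<forall>a b. (\<lambda>v. a * x v + b * y v) \<in> U)"

lemma dot_commute: "dot n x y = dot n y x"
  unfolding dot_def by (simp add: mult.commute)

lemma dot_lincomb_right: "dot n x (\<lambda>v. a * y v + b * z v) = a * dot n x y + b * dot n x z"
  unfolding dot_def by (simp add: sum.distrib sum_distrib_left algebra_simps)

lemma dot_lincomb_left: "dot n (\<lambda>v. a * y v + b * z v) x = a * dot n y x + b * dot n z x"
  unfolding dot_def by (simp add: sum.distrib sum_distrib_left algebra_simps)

lemma dot_scale: "dot n (\<lambda>v. s * x v) (\<lambda>v. s * y v) = s\<^sup>2 * dot n x y"
  unfolding dot_def by (simp add: sum_distrib_left power2_eq_square algebra_simps)

lemma dot_self_nonneg: "dot n x x \<ge> 0"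
  unfolding dot_def by (simp add: sum_nonneg)

lemma dot_self_eq_0_iff: "dot n x x = 0 \<longleftrightarrow> (\<forall>v<n. x v = 0)"
  unfolding dot_def by (subst sum_nonneg_eq_0_iff) auto

lemma dot_eq_0_if_vanishes: "\<forall>v<n. x v = 0 \<Longrightarrow> dot n x y = 0"
  unfolding dot_def by simp

lemma dot_indicator: "A \<subseteq> {..<n} \<Longrightarrow> dot n (indicator A) x = sum x A"
  unfolding dot_def indicator_def by (simp add: sum.If_cases Int_absorb1)

lemma mat_apply_lincomb:
  "mat_apply n a (\<lambda>v. c * x v + d * y v) = (\<lambda>v. c * mat_apply n a x v + d * mat_apply n a y v)"
  unfolding mat_apply_def by (auto simp: sum.distrib sum_distrib_left algebra_simps)

lemma mat_apply_scale: "mat_apply n a (\<lambda>v. s * x v) = (\<lambda>v. s * mat_apply n a x v)"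
  using mat_apply_lincomb[of n a s x 0 x] by simp

lemma dot_mat_apply_symmetric:
  assumes "\<And>u v. u < n \<Longrightarrow> v < n \<Longrightarrow> a u v = a v u"
  shows "dot n (mat_apply n a x) y = dot n x (mat_apply n a y)"
proof -
  have "dot n (mat_apply n a x) y = (\<Sum>v<n. \<Sum>u<n. a v u * x u * y v)"
    unfolding dot_def mat_apply_def by (simp add: sum_distrib_right)
  also have "\<dots> = (\<Sum>u<n. \<Sum>v<n. a u v * x u * y v)"
    using assms by (subst sum.swap) (auto intro!: sum.cong)
  also have "\<dots> = dot n x (mat_apply n a y)"
    unfolding dot_def mat_apply_def by (simp add: sum_distrib_left algebra_simps)
  finally show ?thesis .
qed

lemma mat_apply_mat_mult: "mat_apply n (mat_mult n a b) x = mat_apply n a (mat_apply n b x)"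
proof
  fix v
  have "(\<Sum>w<n. (\<Sum>u<n. a v u * b u w) * x w) = (\<Sum>u<n. a v u * (\<Sum>w<n. b u w * x w))"
    unfolding sum_distrib_left sum_distrib_right by (subst sum.swap) (simp add: mult.assoc)
  then show "mat_apply n (mat_mult n a b) x v = mat_apply n a (mat_apply n b x) v"
    unfolding mat_apply_def mat_mult_def by simp
qed

lemma closed_subspace_below_lincomb:
  "closed_subspace_below n U \<Longrightarrow> x \<in> U \<Longrightarrow> y \<in> U \<Longrightarrow> (\<lambda>v. a * x v + b * y v) \<in> U"
  unfolding closed_subspace_below_def by blast

lemma closed_subspace_below_scale:
  "closed_subspace_below n U \<Longrightarrow> x \<in> U \<Longrightarrow> (\<lambda>v. a * x v) \<in> U"
  using closed_subspace_below_lincomb[of n U x x a 0] by simp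

lemma continuous_on_quadratic_form: "continuous_on UNIV (\<lambda>x. dot n x (mat_apply n b x))"
proof -
  have "dot n x (mat_apply n b x) = (\<Sum>v<n. x v * (\<Sum>u<n. b v u * x u))" for x
    unfolding dot_def mat_apply_def by simp
  then show ?thesis
    by (simp only:) (intro continuous_intros continuous_on_product_coordinates)
qed

lemma compact_unit_sphere:
  assumes "closed_subspace_below n U"
  shows "compact (U \<inter> {x. dot n x x = 1})"
proof -
  define box where "box = PiE UNIV (\<lambda>v::nat. if v < n then {-1..1::real} else {0})"
  have "compactin (product_topology (\<lambda>_. euclidean) UNIV) box"
    unfolding box_def by (subst compactin_PiE) auto
  then have "compact box"
    by (simp add: euclidean_product_topology)
  have "closed {x. dot n x x = 1}"
    unfolding dot_def
    by (intro closed_Collect_eq continuous_intros continuous_on_product_coordinates)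
  then have "compact (box \<inter> (U \<inter> {x. dot n x x = 1}))"
    using assms \<open>compact box\<close> unfolding closed_subspace_below_def
    by (intro compact_Int_closed closed_Int) auto
  moreover have "U \<inter> {x. dot n x x = 1} \<subseteq> box"
  proof
    fix x assume x: "x \<in> U \<inter> {x. dot n x x = 1}"
    have "\<bar>x v\<bar> \<le> 1" if "v < n" for v
    proof -
      have "(x v)\<^sup>2 \<le> dot n x x"
        unfolding dot_def power2_eq_square by (rule member_le_sum) (use that in auto)
      then show ?thesis
        using x by (simp add: abs_square_le_1)
    qed
    then show "x \<in> box"
      using x assms unfolding box_def closed_subspace_below_def by (auto simp: abs_le_iff)
  qed
  ultimately show ?thesis
    by (simp add: Int_absorb1)
qed

section \<open>Rayleigh quotients of symmetric matrices\<close>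

lemma rayleigh_maximiser_exists:
  assumes U: "closed_subspace_below n U" and "x0 \<in> U" and "\<exists>v<n. x0 v \<noteq> 0"
  shows "\<exists>z\<in>U. dot n z z = 1 \<and>
           (\<forall>y\<in>U. dot n y (mat_apply n b y) \<le> dot n z (mat_apply n b z) * dot n y y)"
proof -
  let ?Q = "\<lambda>y. dot n y (mat_apply n b y)"
  let ?K = "U \<inter> {x. dot n x x = 1}"
  have normalise: "(\<lambda>v. s * y v) \<in> ?K" "s\<^sup>2 * dot n y y = 1"
    if "y \<in> U" "dot n y y > 0" "s = 1 / sqrt (dot n y y)" for s y
  proof -
    show "s\<^sup>2 * dot n y y = 1"
      using that(2,3) by (simp add: power_divide)
    then show "(\<lambda>v. s * y v) \<in> ?K"
      using closed_subspace_below_scale[OF U that(1)] by (simp add: dot_scale)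
  qed
  have "dot n x0 x0 > 0"
    using assms(3) dot_self_nonneg[of n x0] dot_self_eq_0_iff[of n x0] by auto
  then have "?K \<noteq> {}"
    using normalise[OF \<open>x0 \<in> U\<close>] by blast
  then obtain z where z: "z \<in> ?K" and max: "\<And>y. y \<in> ?K \<Longrightarrow> ?Q y \<le> ?Q z"
    using continuous_attains_sup[OF compact_unit_sphere[OF U] _
        continuous_on_subset[OF continuous_on_quadratic_form subset_UNIV]] by blast
  have "?Q y \<le> ?Q z * dot n y y" if "y \<in> U" for y
  proof (cases "dot n y y = 0")
    case True
    then show ?thesis
      by (simp add: dot_eq_0_if_vanishes dot_self_eq_0_iff)
  next
    case False
    then have pos: "dot n y y > 0"
      using dot_self_nonneg[of n y] by simp
    define s where "s = 1 / sqrt (dot n y y)"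
    have "s\<^sup>2 * ?Q y \<le> ?Q z"
      using max[OF normalise(1)[OF that pos s_def]] by (simp add: mat_apply_scale dot_scale)
    then have "s\<^sup>2 * dot n y y * ?Q y \<le> ?Q z * dot n y y"
      using pos by (simp add: mult.commute mult.left_commute)
    then show ?thesis
      using normalise(2)[OF that pos s_def] by simp
  qed
  then show ?thesis
    using z by blast
qed

lemma eq_0_if_quadratic_nonpos:
  fixes c K :: real
  assumes "\<And>t. 2 * t * c + t\<^sup>2 * K \<le> 0"
  shows "c = 0"
proof -
  define a where "a = \<bar>K\<bar> + 1"
  have "a > 0" "2 * a + K > 0"
    unfolding a_def by auto
  have "c\<^sup>2 * (2 * a + K) = (2 * (c / a) * c + (c / a)\<^sup>2 * K) * a\<^sup>2"
    using \<open>a > 0\<close> by (simp add: field_simps power2_eq_square)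
  also have "\<dots> \<le> 0"
    using assms[of "c / a"] by (simp add: mult_nonpos_nonneg)
  finally have "c\<^sup>2 \<le> 0"
    using \<open>2 * a + K > 0\<close> by (simp add: mult_le_0_iff)
  then show ?thesis
    by simp
qed

lemma rayleigh_maximiser_lagrange:
  assumes U: "closed_subspace_below n U"
    and sym: "\<And>u v. u < n \<Longrightarrow> v < n \<Longrightarrow> b u v = b v u"
    and z: "z \<in> U" "dot n z z = 1"
    and max: "\<forall>y\<in>U. dot n y (mat_apply n b y) \<le> dot n z (mat_apply n b z) * dot n y y"
    and y: "y \<in> U"
  shows "dot n (mat_apply n b z) y = dot n z (mat_apply n b z) * dot n z y"
proof -
  let ?B = "mat_apply n b"
  define \<rho> where "\<rho> = dot n z (?B z)"
  have "2 * t * (dot n (?B z) y - \<rho> * dot n z y) + t\<^sup>2 * (dot n y (?B y) - \<rho> * dot n y y) \<le> 0"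
    for t
  proof -
    let ?w = "\<lambda>v. 1 * z v + t * y v"
    have "dot n ?w (?B ?w) \<le> \<rho> * dot n ?w ?w"
      using max closed_subspace_below_lincomb[OF U z(1) y] unfolding \<rho>_def by blast
    moreover have "dot n ?w (?B ?w) = \<rho> + 2 * t * dot n (?B z) y + t\<^sup>2 * dot n y (?B y)"
    proof -
      have "dot n z (?B y) = dot n (?B z) y"
        by (rule dot_mat_apply_symmetric[OF sym, symmetric])
      moreover have "dot n y (?B z) = dot n (?B z) y"
        by (rule dot_commute)
      ultimately show ?thesis
        unfolding mat_apply_lincomb dot_lincomb_right dot_lincomb_left \<rho>_def
        by (simp add: power2_eq_square algebra_simps)
    qed
    moreover have "dot n ?w ?w = 1 + 2 * t * dot n z y + t\<^sup>2 * dot n y y"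
      unfolding dot_lincomb_right dot_lincomb_left using z(2) dot_commute[of n y z]
      by (simp add: power2_eq_square algebra_simps)
    ultimately show ?thesis
      by (simp add: algebra_simps)
  qed
  then show ?thesis
    unfolding \<rho>_def using eq_0_if_quadratic_nonpos by fastforce
qed

lemma rayleigh_maximiser_eigenvector:
  assumes U: "closed_subspace_below n U"
    and sym: "\<And>u v. u < n \<Longrightarrow> v < n \<Longrightarrow> b u v = b v u"
    and inv: "\<And>x. x \<in> U \<Longrightarrow> mat_apply n b x \<in> U"
    and z: "z \<in> U" "dot n z z = 1"
    and max: "\<forall>y\<in>U. dot n y (mat_apply n b y) \<le> dot n z (mat_apply n b z) * dot n y y"
  shows "\<forall>v<n. mat_apply n b z v = dot n z (mat_apply n b z) * z v"
proof -
  let ?B = "mat_apply n b"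
  define \<rho> where "\<rho> = dot n z (?B z)"
  define w where "w = (\<lambda>v. 1 * ?B z v + (- \<rho>) * z v)"
  have "w \<in> U"
    unfolding w_def by (intro closed_subspace_below_lincomb[OF U] inv z(1))
  then have "dot n w w = 0"
    using rayleigh_maximiser_lagrange[OF U sym z max, of w]
    unfolding w_def dot_lincomb_left \<rho>_def by simp
  then show ?thesis
    unfolding dot_self_eq_0_iff w_def \<rho>_def by simp
qed

lemma eigenvector_of_square:
  assumes U: "closed_subspace_below n U"
    and inv: "\<And>x. x \<in> U \<Longrightarrow> mat_apply n a x \<in> U"
    and z: "z \<in> U" "\<exists>v<n. z v \<noteq> 0"
    and sq: "\<forall>v<n. mat_apply n a (mat_apply n a z) v = \<mu>\<^sup>2 * z v"
  obtains w \<nu> where "w \<in> U" "\<exists>v<n. w v \<noteq> 0" "\<forall>v<n. mat_apply n a w v = \<nu> * w v" "\<nu>\<^sup>2 = \<mu>\<^sup>2"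
proof (cases "\<exists>v<n. mat_apply n a z v + \<mu> * z v \<noteq> 0")
  case True
  \<comment> \<open>\<open>(A - \<mu>) (A + \<mu>) z = (A\<^sup>2 - \<mu>\<^sup>2) z = 0\<close>, so a nonzero \<open>(A + \<mu>) z\<close> is a \<open>\<mu>\<close>-eigenvector\<close>
  define w where "w = (\<lambda>v. 1 * mat_apply n a z v + \<mu> * z v)"
  have "w \<in> U"
    unfolding w_def by (intro closed_subspace_below_lincomb[OF U] inv z(1))
  moreover have "\<forall>v<n. mat_apply n a w v = \<mu> * w v"
    using sq unfolding w_def mat_apply_lincomb by (simp add: power2_eq_square algebra_simps)
  ultimately show ?thesis
    using that True unfolding w_def by auto
next
  case False
  then have "\<forall>v<n. mat_apply n a z v = (- \<mu>) * z v"
    by (simp add: add_eq_0_iff)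
  then show ?thesis
    using that[OF z, of "- \<mu>"] by simp
qed

lemma exists_eigenvector_norm_ratio_le:
  assumes U: "closed_subspace_below n U"
    and sym: "\<And>u v. u < n \<Longrightarrow> v < n \<Longrightarrow> a u v = a v u"
    and inv: "\<And>x. x \<in> U \<Longrightarrow> mat_apply n a x \<in> U"
    and x0: "x0 \<in> U" "\<exists>v<n. x0 v \<noteq> 0"
  obtains z \<mu> where "z \<in> U" "\<exists>v<n. z v \<noteq> 0" "\<forall>v<n. mat_apply n a z v = \<mu> * z v"
    "dot n (mat_apply n a x0) (mat_apply n a x0) \<le> \<mu>\<^sup>2 * dot n x0 x0"
proof -
  let ?A = "mat_apply n a" and ?b = "mat_mult n a a"
  have form_eq_norm_sq: "dot n y (mat_apply n ?b y) = dot n (?A y) (?A y)" for y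
    unfolding mat_apply_mat_mult by (simp add: dot_mat_apply_symmetric[OF sym] dot_commute)
  have sym_b: "?b u v = ?b v u" if "u < n" "v < n" for u v
    unfolding mat_mult_def using sym that by (auto simp: mult.commute intro!: sum.cong)
  have inv_b: "mat_apply n ?b x \<in> U" if "x \<in> U" for x
    unfolding mat_apply_mat_mult using inv that by blast
  obtain z where z: "z \<in> U" "dot n z z = 1"
    and max: "\<forall>y\<in>U. dot n y (mat_apply n ?b y) \<le> dot n z (mat_apply n ?b z) * dot n y y"
    using rayleigh_maximiser_exists[OF U x0] by blast
  define \<mu> where "\<mu> = sqrt (dot n (?A z) (?A z))"
  have \<mu>: "\<mu>\<^sup>2 = dot n z (mat_apply n ?b z)"
    unfolding \<mu>_def form_eq_norm_sq using dot_self_nonneg by simp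
  have "\<forall>v<n. ?A (?A z) v = \<mu>\<^sup>2 * z v"
    using rayleigh_maximiser_eigenvector[OF U sym_b inv_b z max]
    unfolding mat_apply_mat_mult \<mu> by simp
  moreover have "\<exists>v<n. z v \<noteq> 0"
    using z(2) dot_self_eq_0_iff[of n z] by auto
  ultimately obtain w \<nu> where "w \<in> U" "\<exists>v<n. w v \<noteq> 0" "\<forall>v<n. ?A w v = \<nu> * w v"
    and "\<nu>\<^sup>2 = \<mu>\<^sup>2"
    using eigenvector_of_square[OF U inv z(1)] by blast
  moreover have "dot n (?A x0) (?A x0) \<le> \<mu>\<^sup>2 * dot n x0 x0"
    using max x0(1) unfolding \<mu> form_eq_norm_sq by blast
  ultimately show ?thesis
    using that by metis
qed

corollary exists_eigenvector:
  assumes "closed_subspace_below n U"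
    and "\<And>u v. u < n \<Longrightarrow> v < n \<Longrightarrow> a u v = a v u"
    and "\<And>x. x \<in> U \<Longrightarrow> mat_apply n a x \<in> U"
    and "x0 \<in> U" "\<exists>v<n. x0 v \<noteq> 0"
  obtains z \<mu> where "z \<in> U" "\<exists>v<n. z v \<noteq> 0" "\<forall>v<n. mat_apply n a z v = \<mu> * z v"
proof (rule exists_eigenvector_norm_ratio_le[OF assms])
  fix z \<mu>
  assume "z \<in> U" "\<exists>v<n. z v \<noteq> 0" "\<forall>v<n. mat_apply n a z v = \<mu> * z v"
  then show thesis
    by (rule that)
qed

section \<open>Eigenvalues of square matrices\<close>

definition matrix_eigenvalues :: "nat \<Rightarrow> (nat \<Rightarrow> nat \<Rightarrow> real) \<Rightarrow> real set" where
  "matrix_eigenvalues m a =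
     {\<mu>. \<exists>y. (\<exists>i<m. y i \<noteq> 0) \<and> (\<forall>i<m. (\<Sum>j<m. a i j * y j) = \<mu> * y i)}"

lemma matrix_eigenvalues_subset_spectrum:
  "matrix_eigenvalues m a \<subseteq> spectrum (mat m m (\<lambda>(i, j). a i j))"
proof
  fix \<mu> assume "\<mu> \<in> matrix_eigenvalues m a"
  then obtain y where nz: "\<exists>i<m. y i \<noteq> 0" and ev: "\<forall>i<m. (\<Sum>j<m. a i j * y j) = \<mu> * y i"
    unfolding matrix_eigenvalues_def by blast
  let ?M = "mat m m (\<lambda>(i, j). a i j)"
  have "vec m y \<noteq> 0\<^sub>v m"
    using nz by (metis index_vec index_zero_vec(1))
  moreover have "?M *\<^sub>v vec m y = \<mu> \<cdot>\<^sub>v vec m y"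
    using ev by (intro eq_vecI) (auto simp: scalar_prod_def lessThan_atLeast0)
  ultimately have "eigenvector ?M (vec m y) \<mu>"
    unfolding eigenvector_def by simp
  then show "\<mu> \<in> spectrum ?M"
    unfolding spectrum_def eigenvalue_def by auto
qed

lemma finite_matrix_eigenvalues: "finite (matrix_eigenvalues m a)"
  using card_finite_spectrum(1)[of "mat m m (\<lambda>(i, j). a i j)" m]
  by (auto intro: finite_subset[OF matrix_eigenvalues_subset_spectrum])

lemma matrix_eigenvalue_if_eigenvector:
  "\<exists>v<n. z v \<noteq> 0 \<Longrightarrow> \<forall>v<n. mat_apply n a z v = \<mu> * z v \<Longrightarrow> \<mu> \<in> matrix_eigenvalues n a"
  unfolding matrix_eigenvalues_def mat_apply_def by auto

lemma abs_matrix_eigenvalue_le_row_sum: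
  assumes nonneg: "\<And>i j. i < m \<Longrightarrow> j < m \<Longrightarrow> 0 \<le> a i j"
    and row: "\<And>i. i < m \<Longrightarrow> (\<Sum>j<m. a i j) \<le> R"
    and "\<mu> \<in> matrix_eigenvalues m a"
  shows "\<bar>\<mu>\<bar> \<le> R"
proof -
  obtain y where nz: "\<exists>i<m. y i \<noteq> 0" and ev: "\<forall>i<m. (\<Sum>j<m. a i j * y j) = \<mu> * y i"
    using assms(3) unfolding matrix_eigenvalues_def by blast
  \<comment> \<open>evaluate the eigenvalue equation at a coordinate of largest modulus\<close>
  obtain i where i: "i < m" and max: "\<And>j. j < m \<Longrightarrow> \<bar>y j\<bar> \<le> \<bar>y i\<bar>"
    using ex_greatest_index[of m "\<lambda>j. \<bar>y j\<bar>"] nz by auto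
  have pos: "\<bar>y i\<bar> > 0"
    using nz max by fastforce
  have "\<bar>\<mu>\<bar> * \<bar>y i\<bar> = \<bar>\<Sum>j<m. a i j * y j\<bar>"
    using ev i by (simp add: abs_mult)
  also have "\<dots> \<le> (\<Sum>j<m. a i j * \<bar>y i\<bar>)"
    using nonneg i max
    by (intro order_trans[OF sum_abs] sum_mono) (simp add: abs_mult mult_left_mono)
  also have "\<dots> \<le> R * \<bar>y i\<bar>"
    using row[OF i] pos by (simp add: sum_distrib_right[symmetric])
  finally show ?thesis
    using pos by simp
qed

section \<open>\<open>S\<close>-regular graphs\<close>

definition adjacency_matrix :: "(nat \<Rightarrow> nat \<Rightarrow> bool) \<Rightarrow> nat \<Rightarrow> nat \<Rightarrow> real" where
  "adjacency_matrix E u v = of_bool (E u v)"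

locale S_regular_graph =
  fixes k :: nat and S :: "nat \<Rightarrow> nat \<Rightarrow> nat" and n :: nat
    and E :: "nat \<Rightarrow> nat \<Rightarrow> bool" and cell :: "nat \<Rightarrow> nat"
  assumes S_regular: "S_regular k S n E cell"
begin

abbreviation A :: "(nat \<Rightarrow> real) \<Rightarrow> nat \<Rightarrow> real" where
  "A \<equiv> mat_apply n (adjacency_matrix E)"

definition V :: "nat \<Rightarrow> nat set" where
  "V i = {v. v < n \<and> cell v = i}"

definition neighbours :: "nat \<Rightarrow> nat set" where
  "neighbours v = {u. u < n \<and> E v u}"

lemma edge_sym: "E u v \<Longrightarrow> E v u"
  using S_regular unfolding S_regular_def simple_graph_def by blast

lemma edge_less: "E u v \<Longrightarrow> u < n" "E u v \<Longrightarrow> v < n"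
  using S_regular unfolding S_regular_def simple_graph_def by blast+

lemma cell_less: "v < n \<Longrightarrow> cell v < k"
  using S_regular unfolding S_regular_def by blast

lemma V_nonempty: "i < k \<Longrightarrow> V i \<noteq> {}"
  using S_regular unfolding S_regular_def V_def by blast

lemma finite_V [simp]: "finite (V i)"
  unfolding V_def by simp

lemma V_subset: "V i \<subseteq> {..<n}"
  unfolding V_def by auto

lemma finite_neighbours [simp]: "finite (neighbours v)"
  unfolding neighbours_def by simp

lemma card_neighbours_Int_V: "v < n \<Longrightarrow> j < k \<Longrightarrow> card (neighbours v \<inter> V j) = S (cell v) j"
proof -
  assume "v < n" "j < k"
  moreover have "neighbours v \<inter> V j = {u. u < n \<and> E v u \<and> cell u = j}"
    unfolding neighbours_def V_def by auto
  ultimately show ?thesis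
    using S_regular unfolding S_regular_def by simp
qed

lemma sum_split_cells: "X \<subseteq> {..<n} \<Longrightarrow> sum g X = (\<Sum>j<k. sum g (X \<inter> V j))"
proof -
  assume X: "X \<subseteq> {..<n}"
  then have "finite X" "cell ` X \<subseteq> {..<k}"
    using cell_less finite_subset by auto
  moreover have "X \<inter> V j = {x \<in> X. cell x = j}" for j
    unfolding V_def using X by auto
  ultimately show ?thesis
    using sum.group[of X "{..<k}" cell g] by simp
qed

lemma card_neighbours: "v < n \<Longrightarrow> card (neighbours v) = (\<Sum>j<k. S (cell v) j)"
  using sum_split_cells[of "neighbours v" "\<lambda>_. 1::nat"] card_neighbours_Int_V
  by (auto simp: neighbours_def)

lemma n_eq_sum_card_V: "n = (\<Sum>j<k. card (V j))"
  using sum_split_cells[of "{..<n}" "\<lambda>_. 1::nat"] V_subset by (simp add: Int_absorb1)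

lemma adjacency_matrix_sym: "adjacency_matrix E u v = adjacency_matrix E v u"
  unfolding adjacency_matrix_def by (auto dest: edge_sym)

lemma mat_apply_adjacency: "v < n \<Longrightarrow> A x v = sum x (neighbours v)"
  unfolding mat_apply_def adjacency_matrix_def neighbours_def
  by (simp add: sum.If_cases Int_def conj_commute)

text \<open>In the notation of the paper, \<open>bulk_space\<close> is \<open>W\<^sup>\<bottom>\<close> and \<open>cell_constant_space\<close> is \<open>W\<close>.\<close>
definition bulk_space :: "(nat \<Rightarrow> real) set" where
  "bulk_space = {x. (\<forall>v\<ge>n. x v = 0) \<and> (\<forall>i<k. sum x (V i) = 0)}"

definition cell_constant_space :: "(nat \<Rightarrow> real) set" where
  "cell_constant_space = {x. (\<forall>v\<ge>n. x v = 0) \<and> (\<forall>u<n. \<forall>v<n. cell u = cell v \<longrightarrow> x u = x v)}"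

lemma closed_subspace_below_bulk_space: "closed_subspace_below n bulk_space"
proof -
  have "bulk_space = (\<Inter>v\<in>{n..}. {x. x v = 0}) \<inter> (\<Inter>i<k. {x. sum x (V i) = 0})"
    unfolding bulk_space_def by auto
  then have "closed bulk_space"
    by (simp only:) (intro closed_Int closed_INT ballI closed_Collect_eq continuous_intros
        continuous_on_product_coordinates)
  then show ?thesis
    unfolding closed_subspace_below_def bulk_space_def
    by (auto simp: sum.distrib sum_distrib_left[symmetric])
qed

lemma closed_subspace_below_cell_constant_space: "closed_subspace_below n cell_constant_space"
proof -
  have coordinates: "closed {x::nat \<Rightarrow> real. x u = x v}" "closed {x::nat \<Rightarrow> real. x u = 0}" for u v
    by (intro closed_Collect_eq continuous_on_product_coordinates continuous_on_const)+
  have "cell_constant_space = (\<Inter>v\<in>{n..}. {x. x v = 0}) \<inter>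
      (\<Inter>(u, v)\<in>{(u, v). u < n \<and> v < n \<and> cell u = cell v}. {x. x u = x v})"
    unfolding cell_constant_space_def by auto
  then have "closed cell_constant_space"
    by (simp only:) (auto intro!: closed_Int closed_INT coordinates)
  moreover have "(\<lambda>v. a * x v + b * y v) \<in> cell_constant_space"
    if x: "x \<in> cell_constant_space" and y: "y \<in> cell_constant_space" for x y a b
    unfolding cell_constant_space_def mem_Collect_eq
  proof (intro conjI allI impI)
    fix u v assume "u < n" "v < n" "cell u = cell v"
    then have "x u = x v" "y u = y v"
      using x y unfolding cell_constant_space_def by blast+
    then show "a * x u + b * y u = a * x v + b * y v"
      by simp
  qed (use x y in \<open>simp add: cell_constant_space_def\<close>)
  ultimately show ?thesis
    unfolding closed_subspace_below_def cell_constant_space_def by blast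
qed

lemma bulk_eigenvalue_iff:
  "bulk_eigenvalue n E k cell \<mu> \<longleftrightarrow>
     (\<exists>x\<in>bulk_space. (\<exists>v<n. x v \<noteq> 0) \<and> (\<forall>v<n. A x v = \<mu> * x v))"
  unfolding bulk_eigenvalue_def bulk_space_def V_def
  by (auto simp: mat_apply_adjacency neighbours_def)

lemma A_indicator_V: "u < n \<Longrightarrow> i < k \<Longrightarrow> A (indicator (V i)) u = real (S (cell u) i)"
  by (simp add: mat_apply_adjacency indicator_def sum.If_cases Int_def card_neighbours_Int_V[symmetric])

lemma A_bulk_space: "x \<in> bulk_space \<Longrightarrow> A x \<in> bulk_space"
proof -
  assume x: "x \<in> bulk_space"
  have "sum (A x) (V i) = 0" if i: "i < k" for i
  proof -
    have "sum (A x) (V i) = dot n (A (indicator (V i))) x"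
      unfolding dot_indicator[OF V_subset, symmetric]
      by (rule dot_mat_apply_symmetric[symmetric]) (rule adjacency_matrix_sym)
    also have "\<dots> = (\<Sum>u<n. real (S (cell u) i) * x u)"
      unfolding dot_def using A_indicator_V[OF _ i] by simp
    also have "\<dots> = (\<Sum>j<k. real (S j i) * sum x (V j))"
      by (subst sum_split_cells) (auto simp: V_def sum_distrib_left intro!: sum.cong)
    also have "\<dots> = 0"
      using x unfolding bulk_space_def by simp
    finally show ?thesis .
  qed
  then show ?thesis
    unfolding bulk_space_def by (simp add: mat_apply_def)
qed

definition representative :: "nat \<Rightarrow> nat" where
  "representative i = (SOME v. v \<in> V i)"

lemma representative_in_V: "i < k \<Longrightarrow> representative i \<in> V i"
  unfolding representative_def using V_nonempty by (simp add: some_in_eq)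

lemma cell_constant_spaceD:
  "x \<in> cell_constant_space \<Longrightarrow> u < n \<Longrightarrow> w < n \<Longrightarrow> cell u = cell w \<Longrightarrow> x u = x w"
  unfolding cell_constant_space_def by blast

lemma cell_constant_eq_representative:
  assumes "x \<in> cell_constant_space" "v < n"
  shows "x v = x (representative (cell v))"
proof -
  have "representative (cell v) \<in> V (cell v)"
    using representative_in_V cell_less assms(2) by blast
  then show ?thesis
    unfolding V_def using cell_constant_spaceD[OF assms] by simp
qed

lemma A_cell_constant:
  assumes x: "x \<in> cell_constant_space" and v: "v < n"
  shows "A x v = (\<Sum>j<k. real (S (cell v) j) * x (representative j))"
proof -
  have "A x v = (\<Sum>j<k. sum x (neighbours v \<inter> V j))"
    using mat_apply_adjacency[OF v] sum_split_cells[of "neighbours v" x]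
    by (auto simp: neighbours_def)
  also have "\<dots> = (\<Sum>j<k. \<Sum>u\<in>neighbours v \<inter> V j. x (representative j))"
  proof (intro sum.cong refl)
    fix j u assume "u \<in> neighbours v \<inter> V j"
    then have "u < n" "cell u = j"
      unfolding V_def by auto
    then show "x u = x (representative j)"
      using cell_constant_eq_representative[OF x] by blast
  qed
  also have "\<dots> = (\<Sum>j<k. real (S (cell v) j) * x (representative j))"
    using card_neighbours_Int_V[OF v] by simp
  finally show ?thesis .
qed

lemma A_cell_constant_space:
  assumes "x \<in> cell_constant_space"
  shows "A x \<in> cell_constant_space"
  unfolding cell_constant_space_def mem_Collect_eq
proof (intro conjI allI impI)
  show "A x v = 0" if "n \<le> v" for v
    using that by (simp add: mat_apply_def)
  show "A x u = A x v" if "u < n" "v < n" "cell u = cell v" for u v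
    using that A_cell_constant[OF assms] by simp
qed

text \<open>\<open>S\<close> need not be symmetric; a real eigenvalue is obtained from an eigenvector of \<open>A\<close> on
  the \<open>A\<close>-invariant space of cell-constant vectors. This makes the \<open>Max\<close> in \<open>lambda_S\<close>
  meaningful.\<close>
lemma matrix_eigenvalues_S_nonempty:
  assumes "0 < n"
  shows "matrix_eigenvalues k (\<lambda>i j. real (S i j)) \<noteq> {}"
proof -
  have ones: "indicator {..<n} \<in> cell_constant_space" "\<exists>v<n. indicator {..<n} v \<noteq> (0::real)"
    using assms unfolding cell_constant_space_def by auto
  obtain z \<mu> where z: "z \<in> cell_constant_space" "\<exists>v<n. z v \<noteq> 0"
    and ev: "\<forall>v<n. A z v = \<mu> * z v"
    by (rule exists_eigenvector[where a = "adjacency_matrix E",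
        OF closed_subspace_below_cell_constant_space adjacency_matrix_sym A_cell_constant_space ones])
  obtain v where v: "v < n" "z v \<noteq> 0"
    using z(2) by blast
  then have "\<exists>i<k. z (representative i) \<noteq> 0"
    using cell_constant_eq_representative[OF z(1) v(1)] cell_less[OF v(1)] by auto
  moreover have "(\<Sum>j<k. real (S i j) * z (representative j)) = \<mu> * z (representative i)"
    if "i < k" for i
  proof -
    have "representative i < n" "cell (representative i) = i"
      using representative_in_V[OF that] unfolding V_def by auto
    then show ?thesis
      using A_cell_constant[OF z(1)] ev by simp
  qed
  ultimately have "\<mu> \<in> matrix_eigenvalues k (\<lambda>i j. real (S i j))"
    unfolding matrix_eigenvalues_def by (intro CollectI exI[of _ "\<lambda>j. z (representative j)"]) simp
  then show ?thesis
    by blast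
qed

lemma lambda_S_le_row_sum_bound:
  assumes "0 < n" and row: "\<And>i. i < k \<Longrightarrow> (\<Sum>j<k. S i j) \<le> R"
  shows "lambda_S k S \<le> R"
proof -
  have "lambda_S k S = Max (matrix_eigenvalues k (\<lambda>i j. real (S i j)))"
    by (simp add: lambda_S_def matrix_eigenvalues_def)
  also have "\<dots> \<in> matrix_eigenvalues k (\<lambda>i j. real (S i j))"
    using finite_matrix_eigenvalues matrix_eigenvalues_S_nonempty[OF assms(1)] by (rule Max_in)
  finally have "\<bar>lambda_S k S\<bar> \<le> R"
    using row by (intro abs_matrix_eigenvalue_le_row_sum) (auto simp flip: of_nat_sum)
  then show ?thesis
    by simp
qed

lemma abs_bulk_eigenvalue_le_lambda_B:
  assumes "bulk_eigenvalue n E k cell \<mu>"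
  shows "\<bar>\<mu>\<bar> \<le> lambda_B n E k cell"
proof -
  have "{\<mu>. bulk_eigenvalue n E k cell \<mu>} \<subseteq> matrix_eigenvalues n (adjacency_matrix E)"
    using matrix_eigenvalue_if_eigenvector unfolding bulk_eigenvalue_iff by blast
  then have "finite {\<bar>\<mu>\<bar> | \<mu>. bulk_eigenvalue n E k cell \<mu>}"
    using finite_subset[OF _ finite_matrix_eigenvalues] by (simp add: Setcompr_eq_image)
  then show ?thesis
    unfolding lambda_B_def using assms by (intro Max_ge) auto
qed

lemma card_V_le_along_edge:
  assumes row: "\<And>i. i < k \<Longrightarrow> (\<Sum>j<k. S i j) \<le> D" and "E v u"
  shows "card (V (cell u)) \<le> D * card (V (cell v))"
proof -
  have uv: "u < n" "v < n"
    using edge_less \<open>E v u\<close> by auto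
  have cu: "cell u < k" and cv: "cell v < k"
    using cell_less uv by auto
  have cover: "V (cell u) \<subseteq> (\<Union>x\<in>V (cell v). neighbours x \<inter> V (cell u))"
  proof
    fix w assume w: "w \<in> V (cell u)"
    then have "card (neighbours w \<inter> V (cell v)) = card (neighbours u \<inter> V (cell v))"
      using card_neighbours_Int_V[OF _ cv] uv unfolding V_def by simp
    moreover have "v \<in> neighbours u \<inter> V (cell v)"
      using \<open>E v u\<close> uv edge_sym unfolding neighbours_def V_def by auto
    ultimately have "card (neighbours w \<inter> V (cell v)) \<noteq> 0"
      by (metis card_0_eq empty_iff finite_Int finite_neighbours)
    then obtain x where "x \<in> neighbours w \<inter> V (cell v)"
      by (metis card.empty ex_in_conv)
    then show "w \<in> (\<Union>x\<in>V (cell v). neighbours x \<inter> V (cell u))"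
      using w edge_sym unfolding neighbours_def V_def by auto
  qed
  have "card (V (cell u)) \<le> (\<Sum>x\<in>V (cell v). card (neighbours x \<inter> V (cell u)))"
    using card_mono[OF _ cover] card_UN_le[of "V (cell v)" "\<lambda>x. neighbours x \<inter> V (cell u)"]
    by simp
  also have "\<dots> = (\<Sum>x\<in>V (cell v). S (cell v) (cell u))"
    using card_neighbours_Int_V[OF _ cu] by (intro sum.cong) (auto simp: V_def)
  also have "\<dots> \<le> (\<Sum>x\<in>V (cell v). D)"
    using member_le_sum[of "cell u" "{..<k}" "S (cell v)"] cu row[OF cv]
    by (intro sum_mono) simp
  finally show ?thesis
    by (simp add: mult.commute)
qed

lemma edge_closed_cell_set_contains_all:
  assumes "i \<in> J" "i < k" and closed: "\<And>v u. cell v \<in> J \<Longrightarrow> E v u \<Longrightarrow> cell u \<in> J"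
    and "j < k"
  shows "j \<in> J"
proof -
  obtain a b where a: "a < n" "cell a = i" and b: "b < n" "cell b = j"
    using V_nonempty[OF \<open>i < k\<close>] V_nonempty[OF \<open>j < k\<close>] unfolding V_def by blast
  then have "E\<^sup>*\<^sup>* a b"
    using S_regular unfolding S_regular_def connected_graph_def by blast
  then have "cell b \<in> J"
    by (induction rule: rtranclp_induct) (use a assms(1) closed in auto)
  then show ?thesis
    using b by simp
qed

text \<open>Along an edge cell sizes grow by a factor of at most \<open>D\<close>. Hence the cells of size at most
  \<open>D\<^sup>t |V i0|\<close> form a chain in \<open>t\<close> that becomes stationary within \<open>k\<close> steps; a stationary
  stage is closed under edges and so, by connectivity, contains every cell.\<close>
lemma n_le_card_V:
  assumes "1 \<le> D" and row: "\<And>i. i < k \<Longrightarrow> (\<Sum>j<k. S i j) \<le> D" and "i0 < k"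
  shows "n \<le> k * D ^ k * card (V i0)"
proof -
  let ?m = "card (V i0)"
  define J where "J t = {j. j < k \<and> card (V j) \<le> D ^ t * ?m}" for t
  have pow_mono: "D ^ t * ?m \<le> D ^ t' * ?m" if "t \<le> t'" for t t'
    using \<open>1 \<le> D\<close> that by (intro mult_right_mono power_increasing) auto
  have "J t \<subseteq> J (Suc t)" for t
  proof -
    have "D ^ t * ?m \<le> D ^ Suc t * ?m"
      by (rule pow_mono) simp
    then show ?thesis
      unfolding J_def by (auto simp del: power_Suc intro: order_trans)
  qed
  moreover have "J t \<subseteq> {..<k}" for t
    unfolding J_def by auto
  ultimately obtain t where "t \<le> card {..<k}" and stable: "J (Suc t) = J t"
    by (rule chain_stabilises) simp
  have in_J: "j \<in> J t" if "j < k" for j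
  proof (rule edge_closed_cell_set_contains_all[OF _ \<open>i0 < k\<close> _ that])
    show "i0 \<in> J t"
      using \<open>i0 < k\<close> pow_mono[of 0 t] unfolding J_def by simp
    show "cell u \<in> J t" if "cell v \<in> J t" "E v u" for v u
    proof -
      have "card (V (cell u)) \<le> D * (D ^ t * ?m)"
        using card_V_le_along_edge[OF row \<open>E v u\<close>] \<open>cell v \<in> J t\<close> unfolding J_def
        by (auto intro: order_trans mult_left_mono)
      then have "cell u \<in> J (Suc t)"
        using cell_less edge_less(2)[OF \<open>E v u\<close>] unfolding J_def by (simp add: mult.assoc)
      then show ?thesis
        using stable by simp
    qed
  qed
  have "card (V j) \<le> D ^ k * ?m" if "j < k" for j
  proof -
    have "card (V j) \<le> D ^ t * ?m"
      using in_J[OF that] unfolding J_def by simp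
    also have "\<dots> \<le> D ^ k * ?m"
      using \<open>t \<le> card {..<k}\<close> by (intro pow_mono) simp
    finally show ?thesis .
  qed
  then have "(\<Sum>j<k. card (V j)) \<le> (\<Sum>j<k. D ^ k * ?m)"
    by (intro sum_mono) simp
  then show ?thesis
    using n_eq_sum_card_V by simp
qed

corollary card_V_gt:
  assumes "1 \<le> D" and row: "\<And>i. i < k \<Longrightarrow> (\<Sum>j<k. S i j) \<le> D" and "i < k"
    and big: "k * D ^ k * (D * D + 1) < n"
  shows "D * D + 1 < card (V i)"
proof (rule ccontr)
  assume "\<not> ?thesis"
  then have "k * D ^ k * card (V i) \<le> k * D ^ k * (D * D + 1)"
    by (intro mult_left_mono) simp_all
  then show False
    using n_le_card_V[OF assms(1-3)] big by linarith
qed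

lemma card_neighbours_le:
  "(\<And>i. i < k \<Longrightarrow> (\<Sum>j<k. S i j) \<le> D) \<Longrightarrow> v < n \<Longrightarrow> card (neighbours v) \<le> D"
  using card_neighbours cell_less by simp

lemma ex_vertices_without_common_neighbour:
  assumes row: "\<And>i. i < k \<Longrightarrow> (\<Sum>j<k. S i j) \<le> D" and big: "D * D + 1 < card (V i)"
  obtains v0 v1 where "v0 \<in> V i" "v1 \<in> V i" "v0 \<noteq> v1" "\<And>u. E u v0 \<Longrightarrow> \<not> E u v1"
proof -
  have "V i \<noteq> {}"
    using big by auto
  then obtain v0 where v0: "v0 \<in> V i"
    by blast
  then have "v0 < n"
    unfolding V_def by simp
  define B where "B = insert v0 (\<Union>u\<in>neighbours v0. neighbours u)"
  have "finite B"
    unfolding B_def by simp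
  have "card B \<le> Suc (card (\<Union>u\<in>neighbours v0. neighbours u))"
    unfolding B_def by (simp add: card_insert_if)
  also have "\<dots> \<le> Suc (\<Sum>u\<in>neighbours v0. card (neighbours u))"
    using card_UN_le[OF finite_neighbours] by simp
  also have "\<dots> \<le> Suc (\<Sum>u\<in>neighbours v0. D)"
    using card_neighbours_le[OF row]
    by (intro Suc_le_mono[THEN iffD2] sum_mono) (auto simp: neighbours_def)
  also have "\<dots> \<le> D * D + 1"
    using card_neighbours_le[OF row \<open>v0 < n\<close>] by (simp add: mult_right_mono)
  finally have "\<not> V i \<subseteq> B"
    using big card_mono[OF \<open>finite B\<close>, of "V i"] by linarith
  then obtain v1 where v1: "v1 \<in> V i" "v1 \<notin> B"
    by blast
  have "\<not> E u v1" if "E u v0" for u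
  proof
    assume "E u v1"
    then have "u \<in> neighbours v0" "v1 \<in> neighbours u"
      using that edge_sym edge_less unfolding neighbours_def by auto
    then show False
      using v1(2) unfolding B_def by blast
  qed
  moreover have "v0 \<noteq> v1"
    using v1(2) unfolding B_def by blast
  ultimately show ?thesis
    using that v0 v1(1) by blast
qed

lemma sum_of_bool_edge_eq_card_neighbours: "v < n \<Longrightarrow> (\<Sum>u<n. of_bool (E u v)) = real (card (neighbours v))"
proof -
  assume "v < n"
  have "{..<n} \<inter> {u. E u v} = neighbours v"
    unfolding neighbours_def using edge_sym by auto
  then show ?thesis
    by (simp add: sum_of_bool_eq)
qed

lemma difference_test_vector:
  assumes v0: "v0 \<in> V i" and v1: "v1 \<in> V i" and "v0 \<noteq> v1"
    and no_common: "\<And>u. E u v0 \<Longrightarrow> \<not> E u v1"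
  defines "x \<equiv> (\<lambda>w. indicator {v0} w - indicator {v1} w :: real)"
  shows "x \<in> bulk_space" and "dot n x x = 2" and "dot n (A x) (A x) = 2 * (\<Sum>j<k. S i j)"
proof -
  have lt: "v0 < n" "v1 < n" and cells: "cell v0 = i" "cell v1 = i"
    using v0 v1 unfolding V_def by auto
  have sum_x: "sum x F = of_bool (v0 \<in> F) - of_bool (v1 \<in> F)" if "finite F" for F
    using that unfolding x_def indicator_def by (simp add: sum_subtractf)
  show "x \<in> bulk_space"
    unfolding bulk_space_def mem_Collect_eq
  proof (intro conjI allI impI)
    show "x w = 0" if "n \<le> w" for w
      using that lt unfolding x_def by auto
    show "sum x (V j) = 0" for j
      using lt cells by (simp add: sum_x V_def)
  qed
  have "x w * x w = indicator {v0} w + indicator {v1} w" for w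
    using \<open>v0 \<noteq> v1\<close> unfolding x_def indicator_def by auto
  then show "dot n x x = 2"
    unfolding dot_def using lt by (simp add: sum.distrib indicator_def)
  have "A x u = of_bool (E u v0) - of_bool (E u v1)" if "u < n" for u
    using that lt by (simp add: mat_apply_adjacency sum_x neighbours_def)
  then have "dot n (A x) (A x) = (\<Sum>u<n. of_bool (E u v0) + of_bool (E u v1))"
    unfolding dot_def using no_common by (intro sum.cong) auto
  also have "\<dots> = real (card (neighbours v0)) + real (card (neighbours v1))"
    by (simp only: sum.distrib sum_of_bool_edge_eq_card_neighbours lt)
  finally show "dot n (A x) (A x) = 2 * (\<Sum>j<k. S i j)"
    using lt cells by (simp add: card_neighbours)
qed

lemma sqrt_lambda_S_le_lambda_B:
  assumes "1 \<le> D" and row: "\<And>i. i < k \<Longrightarrow> (\<Sum>j<k. S i j) \<le> D"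
    and big: "k * D ^ k * (D * D + 1) < n"
  shows "sqrt (lambda_S k S) \<le> lambda_B n E k cell"
proof -
  have "0 < n"
    using big by simp
  then have "0 < k"
    using cell_less[of 0] by simp
  then obtain i where i: "i < k" and max: "\<And>j. j < k \<Longrightarrow> (\<Sum>l<k. S j l) \<le> (\<Sum>l<k. S i l)"
    using ex_greatest_index[of k "\<lambda>j. \<Sum>l<k. S j l"] by blast
  have lambda_S: "lambda_S k S \<le> real (\<Sum>l<k. S i l)"
    by (rule lambda_S_le_row_sum_bound[OF \<open>0 < n\<close> max])
  obtain v0 v1 where v: "v0 \<in> V i" "v1 \<in> V i" "v0 \<noteq> v1" "\<And>u. E u v0 \<Longrightarrow> \<not> E u v1"
    using ex_vertices_without_common_neighbour[OF row card_V_gt[OF \<open>1 \<le> D\<close> row i big]]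
    by metis
  define x where "x = (\<lambda>w. indicator {v0} w - indicator {v1} w :: real)"
  have x: "x \<in> bulk_space" "dot n x x = 2" "dot n (A x) (A x) = 2 * (\<Sum>l<k. S i l)"
    using difference_test_vector[OF v] unfolding x_def by auto
  have "\<exists>w<n. x w \<noteq> 0"
    using v(1,3) unfolding x_def V_def by auto
  obtain z \<mu> where "z \<in> bulk_space" "\<exists>w<n. z w \<noteq> 0" "\<forall>w<n. A z w = \<mu> * z w"
    and norm_ratio: "dot n (A x) (A x) \<le> \<mu>\<^sup>2 * dot n x x"
    by (rule exists_eigenvector_norm_ratio_le[where a = "adjacency_matrix E",
        OF closed_subspace_below_bulk_space adjacency_matrix_sym A_bulk_space x(1)
        \<open>\<exists>w<n. x w \<noteq> 0\<close>])
  then have "\<bar>\<mu>\<bar> \<le> lambda_B n E k cell"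
    by (intro abs_bulk_eigenvalue_le_lambda_B) (auto simp: bulk_eigenvalue_iff)
  moreover have "lambda_S k S \<le> \<mu>\<^sup>2"
    using norm_ratio x lambda_S by simp
  then have "sqrt (lambda_S k S) \<le> \<bar>\<mu>\<bar>"
    using real_sqrt_le_mono by fastforce
  ultimately show ?thesis
    by simp
qed

end

theorem mainTheorem12:
  fixes k :: nat and S :: "nat \<Rightarrow> nat \<Rightarrow> nat"
  shows "\<forall>\<epsilon>>0. \<exists>N. \<forall>n E cell. N \<le> n \<and> k < n \<and> S_regular k S n E cell \<longrightarrow>
           lambda_B n E k cell > sqrt (lambda_S k S) - \<epsilon>"
proof (intro allI impI)
  fix \<epsilon> :: real
  assume "\<epsilon> > 0"
  define D where "D = (\<Sum>i<k. \<Sum>j<k. S i j) + 1"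
  have "1 \<le> D"
    unfolding D_def by simp
  have row: "(\<Sum>j<k. S i j) \<le> D" if "i < k" for i
    using member_le_sum[of i "{..<k}" "\<lambda>i. \<Sum>j<k. S i j"] that unfolding D_def by simp
  show "\<exists>N. \<forall>n E cell. N \<le> n \<and> k < n \<and> S_regular k S n E cell \<longrightarrow>
          lambda_B n E k cell > sqrt (lambda_S k S) - \<epsilon>"
  proof (intro exI[of _ "k * D ^ k * (D * D + 1) + 1"] allI impI)
    fix n E cell
    assume H: "k * D ^ k * (D * D + 1) + 1 \<le> n \<and> k < n \<and> S_regular k S n E cell"
    then interpret S_regular_graph k S n E cell
      by unfold_locales simp
    have "k * D ^ k * (D * D + 1) < n"
      using H by simp
    with \<open>1 \<le> D\<close> row have "sqrt (lambda_S k S) \<le> lambda_B n E k cell"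
      by (rule sqrt_lambda_S_le_lambda_B)
    then show "lambda_B n E k cell > sqrt (lambda_S k S) - \<epsilon>"
      using \<open>\<epsilon> > 0\<close> by linarith
  qed
qed

end
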